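(* Let $G=(V,E)$ be a connected undirected unweighted graph on $N$ vertices, and let $S_0\subseteq V$ be the initial set of mutants. Then under the mixed $\delta$-updating process with $\delta=1/2$ and neutral fitness $r=1$, the fixation probability satisfies $\mathsf{fp}_{r=1}^{\delta=1/2}(G,S_0)=|S_0|/N$.
   Context: Mixed $\delta$-updating on a connected undirected unweighted graph $G=(V,E)$ with $N$ vertices ($\deg(u)$ is the number of neighbors of $u$): each vertex holds a mutant (fitness $r>0$) or a wild-type (fitness $1$); $S\subseteq V$ denotes the current set of mutants and $f_S(u)\in\{1,r\}$ the fitness at $u$. At each discrete time step, independently, with probability $\delta$ a death-Birth (dB) step occurs: a vertex $v$ is chosen uniformly at random to die, then a neighbor $u$ of $v$ is chosen with probability proportional to $f_S(u)$, and $u$ copies its type onto $v$. With probability $1-\delta$ a Birth-death (Bd) step occurs: a vertex $u$ is chosen with probability proportional to $f_S(u)$ among all of $V$, then a neighbor $v$ of $u$ is chosen uniformly at random, and $u$ copies its type onto $v$. Fixation means all vertices become mutant. $\mathsf{fp}_r^\delta(G,S_0)$ is the probability of fixation when the initial mutant set is $S_0$. *)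

theory Defs
  imports "HOL-Probability.Probability"
begin

definition connected_graph :: "'a set \<Rightarrow> ('a \<Rightarrow> 'a \<Rightarrow> bool) \<Rightarrow> bool" where
  "connected_graph V E \<longleftrightarrow>
     finite V \<and> V \<noteq> {} \<and>
     (\<forall>u v. E u v \<longrightarrow> u \<in> V \<and> v \<in> V) \<and>
     (\<forall>u v. E u v \<longrightarrow> E v u) \<and>
     (\<forall>u. \<not> E u u) \<and>
     (\<forall>u\<in>V. \<forall>v\<in>V. E\<^sup>*\<^sup>* u v)"

definition nbrs :: "('a \<Rightarrow> 'a \<Rightarrow> bool) \<Rightarrow> 'a \<Rightarrow> 'a set" where
  "nbrs E u = {v. E u v}"

definition fit :: "real \<Rightarrow> 'a set \<Rightarrow> 'a \<Rightarrow> real" where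
  "fit r S u = (if u \<in> S then r else 1)"

definition weighted_pmf :: "'a set \<Rightarrow> ('a \<Rightarrow> real) \<Rightarrow> 'a pmf" where
  "weighted_pmf A w = embed_pmf (\<lambda>x. if x \<in> A then w x / sum w A else 0)"

definition copy_type :: "'a set \<Rightarrow> 'a \<Rightarrow> 'a \<Rightarrow> 'a set" where
  "copy_type S u v = (if u \<in> S then insert v S else S - {v})"

definition dB_step :: "'a set \<Rightarrow> ('a \<Rightarrow> 'a \<Rightarrow> bool) \<Rightarrow> real \<Rightarrow> 'a set \<Rightarrow> 'a set pmf" where
  "dB_step V E r S =
     pmf_of_set V \<bind> (\<lambda>v.
       if nbrs E v = {} then return_pmf S
       else weighted_pmf (nbrs E v) (fit r S) \<bind> (\<lambda>u. return_pmf (copy_type S u v)))"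

definition Bd_step :: "'a set \<Rightarrow> ('a \<Rightarrow> 'a \<Rightarrow> bool) \<Rightarrow> real \<Rightarrow> 'a set \<Rightarrow> 'a set pmf" where
  "Bd_step V E r S =
     weighted_pmf V (fit r S) \<bind> (\<lambda>u.
       if nbrs E u = {} then return_pmf S
       else pmf_of_set (nbrs E u) \<bind> (\<lambda>v. return_pmf (copy_type S u v)))"

definition mixed_step :: "'a set \<Rightarrow> ('a \<Rightarrow> 'a \<Rightarrow> bool) \<Rightarrow> real \<Rightarrow> real \<Rightarrow> 'a set \<Rightarrow> 'a set pmf" where
  "mixed_step V E r \<delta> S =
     bernoulli_pmf \<delta> \<bind> (\<lambda>b. if b then dB_step V E r S else Bd_step V E r S)"

primrec state_dist :: "'a set \<Rightarrow> ('a \<Rightarrow> 'a \<Rightarrow> bool) \<Rightarrow> real \<Rightarrow> real \<Rightarrow> 'a set \<Rightarrow> nat \<Rightarrow> 'a set pmf" where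
  "state_dist V E r \<delta> S0 0 = return_pmf S0"
| "state_dist V E r \<delta> S0 (Suc t) = state_dist V E r \<delta> S0 t \<bind> mixed_step V E r \<delta>"

text \<open>Probability that fixation (all vertices mutant; an absorbing state) has
  occurred by time t. This is nondecreasing in t and its limit is the fixation
  probability fp.\<close>
definition fix_by :: "'a set \<Rightarrow> ('a \<Rightarrow> 'a \<Rightarrow> bool) \<Rightarrow> real \<Rightarrow> real \<Rightarrow> 'a set \<Rightarrow> nat \<Rightarrow> real" where
  "fix_by V E r \<delta> S0 t = measure_pmf.prob (state_dist V E r \<delta> S0 t) {V}"

definition fixation_prob :: "'a set \<Rightarrow> ('a \<Rightarrow> 'a \<Rightarrow> bool) \<Rightarrow> real \<Rightarrow> real \<Rightarrow> 'a set \<Rightarrow> real" where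
  "fixation_prob V E r \<delta> S0 = lim (fix_by V E r \<delta> S0)"

end

theory Submission
  imports Defs
begin

(* At neutral fitness both update rules pick a uniformly random vertex x and a uniformly
   random neighbour u of it; dB copies u onto x and Bd copies x onto u.  With delta = 1/2
   both directions are equally likely, and as one of them gains a mutant exactly when the
   other loses one, the number of mutants |S_t| is a martingale.  Its square, in contrast,
   increases in expectation by at least 1/N^2 in every state other than {} and V (by
   connectivity some edge joins a mutant to a wild-type), while staying below N^2.  Hence
   the expected time spent outside {{}, V} is finite, so P(S_t is neither {} nor V) tends
   to 0, and E |S_t| = |S0| forces N * P(S_t = V) to tend to |S0|. *)

lemma expectation_bind_pmf_finite:
  fixes h :: "'b \<Rightarrow> real"
  assumes "finite (set_pmf p)" "finite (set_pmf (p \<bind> f))"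
  shows "measure_pmf.expectation (p \<bind> f) h
       = measure_pmf.expectation p (\<lambda>x. measure_pmf.expectation (f x) h)"
proof -
  have "measure_pmf.expectation (p \<bind> f) h
      = (\<Sum>x\<in>set_pmf p. pmf p x * measure_pmf.expectation (f x) h)"
    using assms by (subst pmf_expectation_bind[of "set_pmf p"])
      (auto simp: set_bind_pmf intro: finite_subset)
  also have "\<dots> = measure_pmf.expectation p (\<lambda>x. measure_pmf.expectation (f x) h)"
    using assms by (subst integral_measure_pmf_real[of "set_pmf p"]) (auto simp: mult.commute)
  finally show ?thesis .
qed

lemma expectation_pmf_of_set_ge_member:
  fixes g :: "'a \<Rightarrow> real"
  assumes "finite A" "a \<in> A" "\<And>x. x \<in> A \<Longrightarrow> 0 \<le> g x"
  shows "g a / card A \<le> measure_pmf.expectation (pmf_of_set A) g"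
proof -
  have "A \<noteq> {}" using assms(2) by blast
  then show ?thesis
    using assms by (auto simp: integral_pmf_of_set intro!: divide_right_mono member_le_sum)
qed

lemma markov_expectation_invariant:
  fixes \<psi> :: "'b \<Rightarrow> real"
  assumes step: "\<And>t. D (Suc t) = D t \<bind> K"
    and supp: "\<And>t. set_pmf (D t) \<subseteq> W" and W: "finite W"
    and inv: "\<And>S. S \<in> W \<Longrightarrow> measure_pmf.expectation (K S) \<psi> = \<psi> S"
  shows "measure_pmf.expectation (D t) \<psi> = measure_pmf.expectation (D 0) \<psi>"
proof (induction t)
  case (Suc t)
  have "measure_pmf.expectation (D (Suc t)) \<psi>
      = measure_pmf.expectation (D t) (\<lambda>S. measure_pmf.expectation (K S) \<psi>)"
    using supp[of t] supp[of "Suc t"] W unfolding step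
    by (intro expectation_bind_pmf_finite) (auto intro: finite_subset)
  also have "\<dots> = measure_pmf.expectation (D t) \<psi>"
    using supp[of t] inv by (intro integral_cong_AE) (auto simp: AE_measure_pmf_iff)
  finally show ?case using Suc.IH by simp
qed simp

lemma markov_drift_prob_tendsto_0:
  fixes \<phi> :: "'b \<Rightarrow> real"
  assumes step: "\<And>t. D (Suc t) = D t \<bind> K"
    and supp: "\<And>t. set_pmf (D t) \<subseteq> W" and W: "finite W" and c: "c > 0"
    and drift: "\<And>S. S \<in> W \<Longrightarrow> \<phi> S + c * indicator T S \<le> measure_pmf.expectation (K S) \<phi>"
  shows "(\<lambda>t. measure_pmf.prob (D t) T) \<longlonglongrightarrow> 0"
proof -
  define s where "s t = measure_pmf.expectation (D t) \<phi>" for t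
  define p where "p t = measure_pmf.prob (D t) T" for t
  define B where "B = (\<Sum>S\<in>W. \<bar>\<phi> S\<bar>)"
  have int: "integrable (D t) f" for t and f :: "'b \<Rightarrow> real"
    using supp W by (intro integrable_measure_pmf_finite) (blast intro: finite_subset)
  have s_bound: "\<bar>s t\<bar> \<le> B" for t
  proof -
    have "\<bar>s t\<bar> \<le> measure_pmf.expectation (D t) (\<lambda>S. \<bar>\<phi> S\<bar>)"
      unfolding s_def by (rule integral_abs_bound)
    also have "\<dots> \<le> measure_pmf.expectation (D t) (\<lambda>_. B)"
      using supp[of t] W by (intro integral_mono_AE int)
        (auto simp: AE_measure_pmf_iff B_def intro!: member_le_sum)
    finally show ?thesis by simp
  qed
  have s_step: "s t + c * p t \<le> s (Suc t)" for t
  proof -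
    have "s t + c * p t = measure_pmf.expectation (D t) (\<lambda>S. \<phi> S + c * indicator T S)"
      unfolding s_def p_def using int by simp
    also have "\<dots> \<le> measure_pmf.expectation (D t) (\<lambda>S. measure_pmf.expectation (K S) \<phi>)"
      using supp[of t] drift by (intro integral_mono_AE int) (auto simp: AE_measure_pmf_iff)
    also have "\<dots> = s (Suc t)"
      using supp[of t] supp[of "Suc t"] W unfolding s_def step
      by (intro expectation_bind_pmf_finite[symmetric]) (auto intro: finite_subset)
    finally show ?thesis .
  qed
  have acc: "s 0 + c * (\<Sum>i<t. p i) \<le> s t" for t
  proof (induction t)
    case (Suc t)
    then show ?case using s_step[of t] by (simp add: algebra_simps)
  qed simp
  have "(\<Sum>i<t. p i) \<le> 2 * B / c" for t
    using acc[of t] s_bound[of 0] s_bound[of t] c by (simp add: field_simps abs_le_iff)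
  then have "summable p"
    by (intro summableI_nonneg_bounded) (auto simp: p_def)
  then show ?thesis
    unfolding p_def[symmetric] by (rule summable_LIMSEQ_zero)
qed

lemma pmf_full_set_tendsto:
  fixes D :: "nat \<Rightarrow> 'a set pmf"
  assumes fin: "finite V" "V \<noteq> {}" and supp: "\<And>t. set_pmf (D t) \<subseteq> Pow V"
    and mean: "\<And>t. measure_pmf.expectation (D t) (\<lambda>S. real (card S)) = m"
    and transient: "(\<lambda>t. measure_pmf.prob (D t) {S. S \<noteq> {} \<and> S \<noteq> V}) \<longlonglongrightarrow> 0"
  shows "(\<lambda>t. pmf (D t) V) \<longlonglongrightarrow> m / card V"
proof -
  define N where "N = real (card V)"
  define T where "T = {S. S \<noteq> {} \<and> S \<noteq> V}"
  define r where "r t = measure_pmf.expectation (D t) (\<lambda>S. real (card S) * indicator T S)" for t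
  have N: "N > 0" using fin by (simp add: N_def card_gt_0_iff)
  have int: "integrable (D t) f" for t and f :: "'a set \<Rightarrow> real"
    using supp fin by (intro integrable_measure_pmf_finite) (blast intro: finite_subset)
  have card_le: "real (card S) \<le> N" if "S \<in> set_pmf (D t)" for S t
    using supp[of t] that fin by (auto simp: N_def intro!: card_mono)
  have split: "m = N * pmf (D t) V + r t" for t
  proof -
    have "m = measure_pmf.expectation (D t) (\<lambda>S. N * indicator {V} S + real (card S) * indicator T S)"
      unfolding mean[of t, symmetric] using supp[of t]
      by (intro integral_cong_AE) (auto simp: AE_measure_pmf_iff T_def N_def indicator_def)
    then show ?thesis
      using int by (simp add: r_def measure_pmf_single)
  qed
  have r_nonneg: "0 \<le> r t" for t
    unfolding r_def by (intro integral_nonneg_AE) auto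
  have r_le: "r t \<le> N * measure_pmf.prob (D t) T" for t
  proof -
    have "r t \<le> measure_pmf.expectation (D t) (\<lambda>S. N * indicator T S)"
      unfolding r_def using card_le by (intro integral_mono_AE int)
        (auto simp: AE_measure_pmf_iff indicator_def)
    then show ?thesis by simp
  qed
  have "(\<lambda>t. N * measure_pmf.prob (D t) T) \<longlonglongrightarrow> N * 0"
    using transient unfolding T_def[symmetric] by (intro tendsto_mult tendsto_const)
  then have "r \<longlonglongrightarrow> 0"
    using r_nonneg r_le by (intro tendsto_sandwich[of "\<lambda>_. 0" r _ "\<lambda>t. N * measure_pmf.prob (D t) T"]) auto
  then have "(\<lambda>t. (m - r t) / N) \<longlonglongrightarrow> (m - 0) / N"
    using N by (intro tendsto_intros) auto
  moreover have "(m - r t) / N = pmf (D t) V" for t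
    using split[of t] N by (simp add: field_simps)
  ultimately show ?thesis by (simp add: N_def)
qed

lemma connected_graphD:
  assumes "connected_graph V E"
  shows "finite V" "V \<noteq> {}" "nbrs E x \<subseteq> V" "finite (nbrs E x)"
proof -
  show "finite V" "V \<noteq> {}" "nbrs E x \<subseteq> V"
    using assms by (auto simp: connected_graph_def nbrs_def)
  then show "finite (nbrs E x)" by (blast intro: finite_subset)
qed

lemma connected_graph_boundary_edge:
  assumes "connected_graph V E" "a \<in> S" "b \<in> V" "b \<notin> S" "S \<subseteq> V"
  obtains x u where "E x u" "x \<in> S" "u \<notin> S"
proof -
  have "E\<^sup>*\<^sup>* a b" using assms unfolding connected_graph_def by blast
  then have "\<exists>x u. E x u \<and> x \<in> S \<and> u \<notin> S"
    using assms(2,4) by (induction rule: rtranclp_induct) blast+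
  then show ?thesis using that by blast
qed

lemma copy_type_self [simp]: "copy_type S x x = S"
  by (auto simp: copy_type_def)

lemma card_copy_type:
  assumes "finite S"
  shows "real (card (copy_type S u v))
       = real (card S) + (if u \<in> S \<and> v \<notin> S then 1 else if u \<notin> S \<and> v \<in> S then -1 else 0)"
proof -
  have "v \<in> S \<Longrightarrow> 1 \<le> card S" using assms by (simp add: Suc_le_eq card_gt_0_iff) blast
  then show ?thesis
    using assms by (auto simp: copy_type_def card_insert_if card_Diff_singleton_if of_nat_diff)
qed

lemma card_copy_type_swap:
  "finite S \<Longrightarrow> real (card (copy_type S u x)) + real (card (copy_type S x u)) = 2 * real (card S)"
  by (simp add: card_copy_type)

lemma card_copy_type_swap_sq:
  "finite S \<Longrightarrow> real (card (copy_type S u x))^2 + real (card (copy_type S x u))^2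
     = 2 * real (card S)^2 + 2 * of_bool ((u \<in> S) \<noteq> (x \<in> S))"
  by (simp add: card_copy_type power2_eq_square algebra_simps)

lemma weighted_pmf_fit_1:
  assumes "finite A" "A \<noteq> {}"
  shows "weighted_pmf A (fit 1 S) = pmf_of_set A"
proof -
  have "(\<lambda>x. if x \<in> A then fit 1 S x / sum (fit 1 S) A else 0) = pmf (pmf_of_set A)"
    using assms by (intro ext) (auto simp: fit_def indicator_def)
  then show ?thesis
    unfolding weighted_pmf_def by (metis type_definition.Rep_inverse[OF td_pmf_embed_pmf])
qed

(* An isolated vertex is paired with itself: as copy_type S x x = S, this reproduces the
   branch of dB_step and Bd_step in which nothing happens. *)
definition nbr_pmf :: "('a \<Rightarrow> 'a \<Rightarrow> bool) \<Rightarrow> 'a \<Rightarrow> 'a pmf" where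
  "nbr_pmf E x = (if nbrs E x = {} then return_pmf x else pmf_of_set (nbrs E x))"

lemma dB_step_neutral:
  assumes "connected_graph V E"
  shows "dB_step V E 1 S = pmf_of_set V \<bind> (\<lambda>v. nbr_pmf E v \<bind> (\<lambda>u. return_pmf (copy_type S u v)))"
  using connected_graphD[OF assms]
  unfolding dB_step_def nbr_pmf_def by (intro bind_pmf_cong) (auto simp: weighted_pmf_fit_1 bind_return_pmf)

lemma Bd_step_neutral:
  assumes "connected_graph V E"
  shows "Bd_step V E 1 S = pmf_of_set V \<bind> (\<lambda>u. nbr_pmf E u \<bind> (\<lambda>v. return_pmf (copy_type S u v)))"
  using connected_graphD[OF assms]
  unfolding Bd_step_def nbr_pmf_def
  by (subst weighted_pmf_fit_1) (auto intro: bind_pmf_cong simp: bind_return_pmf)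

lemma mixed_step_neutral:
  assumes "connected_graph V E"
  shows "mixed_step V E 1 \<delta> S = pmf_of_set V \<bind> (\<lambda>x. nbr_pmf E x \<bind> (\<lambda>u.
           map_pmf (\<lambda>b. if b then copy_type S u x else copy_type S x u) (bernoulli_pmf \<delta>)))"
proof -
  have "mixed_step V E 1 \<delta> S = bernoulli_pmf \<delta> \<bind> (\<lambda>b. pmf_of_set V \<bind> (\<lambda>x. nbr_pmf E x \<bind>
          (\<lambda>u. return_pmf (if b then copy_type S u x else copy_type S x u))))"
    unfolding mixed_step_def dB_step_neutral[OF assms] Bd_step_neutral[OF assms]
    by (intro bind_pmf_cong) auto
  also have "\<dots> = pmf_of_set V \<bind> (\<lambda>x. nbr_pmf E x \<bind> (\<lambda>u. bernoulli_pmf \<delta> \<bind>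
          (\<lambda>b. return_pmf (if b then copy_type S u x else copy_type S x u))))"
    by (subst bind_commute_pmf) (subst bind_commute_pmf, rule refl)
  finally show ?thesis by (simp add: map_pmf_def)
qed

lemma set_pmf_nbr_pmf:
  assumes "connected_graph V E" "x \<in> V"
  shows "set_pmf (nbr_pmf E x) \<subseteq> V" "finite (set_pmf (nbr_pmf E x))"
  using connected_graphD[OF assms(1)] assms(2) by (auto simp: nbr_pmf_def)

lemma copy_type_subset: "S \<subseteq> V \<Longrightarrow> v \<in> V \<Longrightarrow> copy_type S u v \<subseteq> V"
  by (auto simp: copy_type_def)

lemma set_pmf_mixed_step_neutral:
  assumes "connected_graph V E" "S \<subseteq> V"
  shows "set_pmf (mixed_step V E 1 \<delta> S) \<subseteq> Pow V"
proof -
  have "copy_type S u x \<in> Pow V" "copy_type S x u \<in> Pow V"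
    if "x \<in> V" "u \<in> set_pmf (nbr_pmf E x)" for x u
  proof -
    have "u \<in> V" using set_pmf_nbr_pmf(1)[OF assms(1) that(1)] that(2) by blast
    then show "copy_type S u x \<in> Pow V" "copy_type S x u \<in> Pow V"
      using that(1) assms(2) by (simp_all add: copy_type_subset)
  qed
  with connected_graphD(1,2)[OF assms(1)] show ?thesis
    unfolding mixed_step_neutral[OF assms(1)] set_bind_pmf set_map_pmf set_pmf_of_set
    by (force split: if_splits)
qed

lemma expectation_mixed_step_half:
  fixes h :: "'a set \<Rightarrow> real"
  assumes "connected_graph V E"
  shows "measure_pmf.expectation (mixed_step V E 1 (1/2) S) h
       = measure_pmf.expectation (pmf_of_set V) (\<lambda>x. measure_pmf.expectation (nbr_pmf E x)
           (\<lambda>u. (h (copy_type S u x) + h (copy_type S x u)) / 2))"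
    (is "_ = ?rhs")
proof -
  note graph = connected_graphD[OF assms] and nbr = set_pmf_nbr_pmf[OF assms]
  have coin: "finite (set_pmf (map_pmf g (bernoulli_pmf (1/2))))" for g :: "bool \<Rightarrow> 'a set"
    by simp
  have inner: "measure_pmf.expectation (nbr_pmf E x \<bind> (\<lambda>u.
           map_pmf (\<lambda>b. if b then copy_type S u x else copy_type S x u) (bernoulli_pmf (1/2)))) h
        = measure_pmf.expectation (nbr_pmf E x) (\<lambda>u. (h (copy_type S u x) + h (copy_type S x u)) / 2)"
    if "x \<in> V" for x
    using nbr[OF that] coin by (subst expectation_bind_pmf_finite) (auto simp: set_bind_pmf add_divide_distrib)
  have "measure_pmf.expectation (mixed_step V E 1 (1/2) S) h
      = measure_pmf.expectation (pmf_of_set V) (\<lambda>x. measure_pmf.expectation (nbr_pmf E x \<bind> (\<lambda>u.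
           map_pmf (\<lambda>b. if b then copy_type S u x else copy_type S x u) (bernoulli_pmf (1/2)))) h)"
    unfolding mixed_step_neutral[OF assms] using graph nbr coin
    by (intro expectation_bind_pmf_finite) (auto simp: set_bind_pmf)
  also have "\<dots> = ?rhs"
    using graph by (intro integral_cong_AE) (simp_all add: AE_measure_pmf_iff inner)
  finally show ?thesis .
qed

lemma expectation_card_mixed_step:
  assumes "connected_graph V E" "finite S"
  shows "measure_pmf.expectation (mixed_step V E 1 (1/2) S) (\<lambda>T. real (card T)) = real (card S)"
  using assms by (simp add: expectation_mixed_step_half card_copy_type_swap)

lemma expectation_card_sq_mixed_step:
  assumes G: "connected_graph V E" and S: "S \<subseteq> V"
  shows "real (card S)^2 + 1 / real (card V)^2 * indicator {S. S \<noteq> {} \<and> S \<noteq> V} S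
       \<le> measure_pmf.expectation (mixed_step V E 1 (1/2) S) (\<lambda>T. real (card T)^2)"
proof -
  note graph = connected_graphD[OF G] and nbr = set_pmf_nbr_pmf[OF G]
  define N where "N = real (card V)"
  define disagree where "disagree x =
    measure_pmf.expectation (nbr_pmf E x) (\<lambda>u. of_bool ((u \<in> S) \<noteq> (x \<in> S)) :: real)" for x
  have fin_S: "finite S" using S graph by (blast intro: finite_subset)
  have N: "N > 0" using graph by (simp add: N_def card_gt_0_iff)
  have expectation: "measure_pmf.expectation (mixed_step V E 1 (1/2) S) (\<lambda>T. real (card T)^2)
      = real (card S)^2 + measure_pmf.expectation (pmf_of_set V) disagree"
  proof -
    have "measure_pmf.expectation (nbr_pmf E x)
            (\<lambda>u. (real (card (copy_type S u x))^2 + real (card (copy_type S x u))^2) / 2)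
          = real (card S)^2 + disagree x" if "x \<in> V" for x
      using nbr[OF that] fin_S
      by (simp add: card_copy_type_swap_sq disagree_def integrable_measure_pmf_finite)
    then show ?thesis
      using graph unfolding expectation_mixed_step_half[OF G]
      by (subst integral_cong_AE[where g = "\<lambda>x. real (card S)^2 + disagree x"])
        (simp_all add: AE_measure_pmf_iff integrable_measure_pmf_finite)
  qed
  have "1 / N^2 \<le> measure_pmf.expectation (pmf_of_set V) disagree"
    if transient: "S \<noteq> {}" "S \<noteq> V"
  proof -
    obtain a b where "a \<in> S" "b \<in> V" "b \<notin> S" using transient S by blast
    then obtain x u where xu: "E x u" "x \<in> S" "u \<notin> S"
      using connected_graph_boundary_edge[OF G _ _ _ S] by metis
    have x: "x \<in> V" and u: "u \<in> nbrs E x" using xu S by (auto simp: nbrs_def)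
    have deg: "0 < card (nbrs E x)" "real (card (nbrs E x)) \<le> N"
      using u graph(1) graph(3,4)[of x] by (auto simp: N_def card_gt_0_iff card_mono)
    have "1 / N \<le> 1 / card (nbrs E x)"
      using deg by (simp add: frac_le)
    also have "\<dots> \<le> disagree x"
      using expectation_pmf_of_set_ge_member[of "nbrs E x" u "\<lambda>u. of_bool ((u \<in> S) \<noteq> (x \<in> S))"]
        u xu graph by (auto simp: disagree_def nbr_pmf_def)
    finally have "1 / N / N \<le> disagree x / N"
      using N by (intro divide_right_mono) auto
    also have "\<dots> \<le> measure_pmf.expectation (pmf_of_set V) disagree"
      using expectation_pmf_of_set_ge_member[of V x disagree] x graph by (simp add: N_def disagree_def)
    finally show ?thesis by (simp add: power2_eq_square)
  qed
  moreover have "0 \<le> measure_pmf.expectation (pmf_of_set V) disagree"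
    unfolding disagree_def by (intro integral_nonneg_AE) auto
  ultimately show ?thesis
    unfolding expectation N_def by (auto simp: indicator_def)
qed

lemma set_pmf_state_dist:
  assumes "connected_graph V E" "S0 \<subseteq> V"
  shows "set_pmf (state_dist V E 1 \<delta> S0 t) \<subseteq> Pow V"
proof (induction t)
  case (Suc t)
  have "set_pmf (mixed_step V E 1 \<delta> S) \<subseteq> Pow V" if "S \<in> set_pmf (state_dist V E 1 \<delta> S0 t)" for S
    using that Suc.IH by (intro set_pmf_mixed_step_neutral[OF assms(1)]) blast
  then show ?case by (auto simp: set_bind_pmf)
qed (use assms in simp)

theorem mainTheorem1:
  fixes V :: "'a set" and E :: "'a \<Rightarrow> 'a \<Rightarrow> bool" and S0 :: "'a set"
  assumes "connected_graph V E"
    and "S0 \<subseteq> V"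
  shows "fix_by V E 1 (1/2) S0 \<longlonglongrightarrow> real (card S0) / real (card V)
         \<and> fixation_prob V E 1 (1/2) S0 = real (card S0) / real (card V)"
proof -
  let ?D = "state_dist V E 1 (1/2) S0" and ?K = "mixed_step V E 1 (1/2)"
  note graph = connected_graphD[OF assms(1)]
  have step: "?D (Suc t) = ?D t \<bind> ?K" for t by simp
  have supp: "set_pmf (?D t) \<subseteq> Pow V" for t by (rule set_pmf_state_dist[OF assms])
  have "measure_pmf.expectation (?K S) (\<lambda>S. real (card S)) = real (card S)"
    if "S \<in> Pow V" for S
    using that graph(1) by (intro expectation_card_mixed_step[OF assms(1)]) (auto intro: finite_subset)
  then have mean: "measure_pmf.expectation (?D t) (\<lambda>S. real (card S)) = real (card S0)" for t
    using markov_expectation_invariant[where D = ?D and K = ?K, OF step supp] graph(1) by simp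
  have drift: "real (card S)^2 + 1 / real (card V)^2 * indicator {S. S \<noteq> {} \<and> S \<noteq> V} S
      \<le> measure_pmf.expectation (?K S) (\<lambda>S. real (card S)^2)" if "S \<in> Pow V" for S
    using that by (intro expectation_card_sq_mixed_step[OF assms(1)]) simp
  have "(\<lambda>t. measure_pmf.prob (?D t) {S. S \<noteq> {} \<and> S \<noteq> V}) \<longlonglongrightarrow> 0"
    using graph(1,2) by (intro markov_drift_prob_tendsto_0[where D = ?D and K = ?K
        and \<phi> = "\<lambda>S. real (card S)^2", OF step supp _ _ drift]) (auto simp: card_gt_0_iff)
  with graph(1,2) supp mean have limit: "fix_by V E 1 (1/2) S0 \<longlonglongrightarrow> real (card S0) / real (card V)"
    unfolding fix_by_def measure_pmf_single by (rule pmf_full_set_tendsto)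
  then show ?thesis
    unfolding fixation_prob_def using limI by blast
qed

end
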